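(* Let $K \ge 1$ be an integer and let $\Phi \in \mathbb{R}^{M \times N}$ satisfy the restricted isometry property of order $K+1$ with isometry constant $\delta < \frac{1}{3\sqrt{K}}$. Then for any $x \in \mathbb{R}^N$ with $\|x\|_0 \le K$, Orthogonal Matching Pursuit applied to $\Phi$ and $y = \Phi x$ recovers $x$ exactly in $K$ iterations, i.e. $x^K = x$.
   Context: For $x \in \mathbb{R}^N$, $\|x\|_0 := |\mathrm{supp}(x)|$ is the number of nonzero entries. A matrix $\Phi \in \mathbb{R}^{M\times N}$ satisfies the restricted isometry property (RIP) of order $K$ with isometry constant $\delta \in (0,1)$ if $(1-\delta)\|x\|_2^2 \le \|\Phi x\|_2^2 \le (1+\delta)\|x\|_2^2$ for all $x \in \mathbb{R}^N$ with $\|x\|_0 \le K$. Orthogonal Matching Pursuit (OMP) with input $\Phi$ and $y \in \mathbb{R}^M$: initialize $r^0 = y$, $x^0 = 0$, $\Lambda^0 = \emptyset$, $\ell = 0$. Each iteration: compute $h^\ell = \Phi^T r^\ell$; set $\Lambda^{\ell+1} = \Lambda^\ell \cup \{j^*\}$ where $j^*$ is an index maximizing $|h^\ell(j)|$ (if several maxima exist, exactly one is chosen); set $x^{\ell+1} = \arg\min_{z:\, \mathrm{supp}(z) \subseteq \Lambda^{\ell+1}} \|y - \Phi z\|_2$ and $r^{\ell+1} = y - \Phi x^{\ell+1}$; increment $\ell$. The output after $\ell$ iterations is $x^\ell$. *)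

theory Defs
  imports "HOL-Analysis.Analysis"
begin

definition supp_vec :: "real^'n \<Rightarrow> 'n set" where
  "supp_vec x = {i. x $ i \<noteq> 0}"

definition l0norm :: "real^'n \<Rightarrow> nat" where
  "l0norm x = card (supp_vec x)"

definition RIP :: "real^'n^'m \<Rightarrow> nat \<Rightarrow> real \<Rightarrow> bool" where
  "RIP \<Phi> K \<delta> \<longleftrightarrow> 0 < \<delta> \<and> \<delta> < 1 \<and>
     (\<forall>x::real^'n. l0norm x \<le> K \<longrightarrow>
        (1 - \<delta>) * (norm x)\<^sup>2 \<le> (norm (\<Phi> *v x))\<^sup>2 \<and>
        (norm (\<Phi> *v x))\<^sup>2 \<le> (1 + \<delta>) * (norm x)\<^sup>2)"

text \<open>A valid run of OMP for L iterations: Lam l is the support set \<Lambda>^l,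
  xs l is the iterate x^l, the residual is r^l = y - \<Phi> x^l.
  Every admissible choice (tie-breaking of the maximizer, and of the least-squares
  minimizer) is allowed.\<close>

definition omp_run :: "real^'n^'m \<Rightarrow> real^'m \<Rightarrow> nat \<Rightarrow> (nat \<Rightarrow> 'n set) \<Rightarrow> (nat \<Rightarrow> real^'n) \<Rightarrow> bool" where
  "omp_run \<Phi> y L Lam xs \<longleftrightarrow>
     Lam 0 = {} \<and> xs 0 = 0 \<and>
     (\<forall>l<L. let h = transpose \<Phi> *v (y - \<Phi> *v xs l) in
        \<exists>j. (\<forall>i. \<bar>h $ i\<bar> \<le> \<bar>h $ j\<bar>) \<and>
            Lam (Suc l) = insert j (Lam l) \<and>
            supp_vec (xs (Suc l)) \<subseteq> Lam (Suc l) \<and>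
            (\<forall>z. supp_vec z \<subseteq> Lam (Suc l) \<longrightarrow>
                 norm (y - \<Phi> *v xs (Suc l)) \<le> norm (y - \<Phi> *v z)))"

end

theory Submission
  imports Defs
begin

text \<open>Write \<open>T = supp x\<close>. As long as \<open>T\<close> is not covered, the residual of OMP is \<open>\<Phi> u\<close> with
  \<open>u = x - x\<^sup>l\<close> supported on \<open>T\<close>, and \<open>h = \<Phi>\<^sup>T \<Phi> u\<close> is the correlation vector. The lower RIP
  bound and Cauchy-Schwarz give \<open>(1 - \<delta>) \<parallel>u\<parallel> \<le> \<surd>K max\<^sub>i \<bar>h\<^sub>i\<bar>\<close>, while for \<open>i \<notin> T\<close>
  polarization of the RIP gives \<open>\<bar>h\<^sub>i\<bar> \<le> \<delta> \<parallel>u\<parallel>\<close>. Since \<open>\<delta> (1 + \<surd>K) < 1\<close>, the greedy index lies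
  in \<open>T\<close>, and it is new because the least-squares residual is orthogonal to the columns already
  chosen. Hence after \<open>K\<close> steps \<open>T \<subseteq> \<Lambda>\<^sup>K\<close>, so \<open>x\<close> itself competes in the last least-squares
  problem, \<open>\<Phi> (x - x\<^sup>K) = 0\<close>, and the RIP on the \<open>K\<close>-sparse vector \<open>x - x\<^sup>K\<close> forces \<open>x\<^sup>K = x\<close>.\<close>

lemma polarization_identity:
  fixes x y :: "'a::real_inner"
  shows "(norm (x + y))\<^sup>2 - (norm (x - y))\<^sup>2 = 4 * inner x y"
  unfolding power2_norm_eq_inner inner_add_left inner_add_right inner_diff_left inner_diff_right
  by (simp add: inner_commute[of y x])

lemma inner_eq_0_if_norm_minimal:
  fixes r a :: "'a::real_inner"
  assumes "\<And>t. norm r \<le> norm (r - t *\<^sub>R a)"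
  shows "inner a r = 0"
proof (cases "a = 0")
  case False
  define t where "t = inner a r / inner a a"
  have q: "inner a a > 0" using False by simp
  have "inner r r \<le> inner (r - t *\<^sub>R a) (r - t *\<^sub>R a)"
    using assms[of t] by (simp flip: power2_norm_eq_inner add: power_mono)
  also have "\<dots> = inner r r - (inner a r)\<^sup>2 / inner a a"
    using q unfolding t_def inner_diff_left inner_diff_right inner_scaleR_left inner_scaleR_right
    by (simp add: inner_commute[of r a] power2_eq_square field_simps)
  finally have "(inner a r)\<^sup>2 / inner a a \<le> 0" by simp
  then show ?thesis using q by (simp add: divide_le_0_iff)
qed simp

lemma inner_transpose_mult:
  fixes A :: "real^'n^'m"
  shows "inner x (transpose A *v y) = inner (A *v x) y"
  by (metis dot_lmul_matrix vector_transpose_matrix)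

lemma transpose_mult_component:
  fixes A :: "real^'n^'m"
  shows "(transpose A *v y) $ k = inner (A *v axis k 1) y"
  by (metis inner_transpose_mult inner_axis inner_commute real_inner_1_right)

lemma supp_vec_diff: "supp_vec (a - b) \<subseteq> supp_vec a \<union> supp_vec b"
  unfolding supp_vec_def by auto

lemma l0norm_le_card:
  fixes v :: "real^'n"
  assumes "supp_vec v \<subseteq> S"
  shows "l0norm v \<le> card S"
  unfolding l0norm_def using assms by (simp add: card_mono)

lemma norm_eq_L2_set_supp:
  fixes u :: "real^'n"
  assumes "supp_vec u \<subseteq> T"
  shows "norm u = L2_set (\<lambda>k. u $ k) T"
proof -
  have "(\<Sum>k\<in>T. (u $ k)\<^sup>2) = (\<Sum>k\<in>UNIV. (u $ k)\<^sup>2)"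
    by (rule sum.mono_neutral_left) (use assms in \<open>auto simp: supp_vec_def\<close>)
  then show ?thesis by (simp add: norm_vec_def L2_set_def)
qed

lemma inner_le_sqrt_card_max_abs:
  fixes u h :: "real^'n"
  assumes "supp_vec u \<subseteq> T" and "\<And>k. \<bar>h $ k\<bar> \<le> H"
  shows "inner u h \<le> sqrt (card T) * H * norm u"
proof -
  have "inner u h = (\<Sum>k\<in>T. u $ k * h $ k)"
    unfolding inner_vec_def inner_real_def
    by (rule sum.mono_neutral_right) (use assms(1) in \<open>auto simp: supp_vec_def\<close>)
  also have "\<dots> \<le> (\<Sum>k\<in>T. \<bar>u $ k\<bar> * \<bar>h $ k\<bar>)"
    by (intro sum_mono) (metis abs_ge_self abs_mult)
  also have "\<dots> \<le> L2_set (\<lambda>k. u $ k) T * L2_set (\<lambda>k. h $ k) T"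
    by (rule L2_set_mult_ineq)
  also have "L2_set (\<lambda>k. h $ k) T \<le> L2_set (\<lambda>k. H) T"
    unfolding L2_set_def using assms(2)
    by (intro real_sqrt_le_mono sum_mono) (metis abs_ge_zero abs_le_square_iff abs_of_nonneg order_trans)
  also have "L2_set (\<lambda>k. H) T = sqrt (card T) * H"
    using assms(2) L2_set_constant by (metis abs_ge_zero abs_of_nonneg order_trans)
  finally show ?thesis
    using norm_eq_L2_set_supp[OF assms(1)] by (simp add: mult_right_mono mult_ac)
qed

lemma RIP_lower:
  assumes "RIP \<Phi> K \<delta>" and "l0norm v \<le> K"
  shows "(1 - \<delta>) * (norm v)\<^sup>2 \<le> (norm (\<Phi> *v v))\<^sup>2"
  using assms unfolding RIP_def by blast

lemma RIP_upper:
  assumes "RIP \<Phi> K \<delta>" and "l0norm v \<le> K"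
  shows "(norm (\<Phi> *v v))\<^sup>2 \<le> (1 + \<delta>) * (norm v)\<^sup>2"
  using assms unfolding RIP_def by blast

lemma RIP_sparse_kernel:
  assumes "RIP \<Phi> K \<delta>" and "l0norm v \<le> K" and "\<Phi> *v v = 0"
  shows "v = 0"
proof -
  have "(1 - \<delta>) * (norm v)\<^sup>2 \<le> 0" using RIP_lower[OF assms(1,2)] assms(3) by simp
  moreover have "\<delta> < 1" using assms(1) unfolding RIP_def by simp
  ultimately show ?thesis by (simp add: mult_le_0_iff)
qed

lemma RIP_column_correlation:
  fixes \<Phi> :: "real^'n^'m"
  assumes rip: "RIP \<Phi> (K + 1) \<delta>" and "supp_vec a \<subseteq> T" "card T \<le> K" "i \<notin> T"
  shows "\<bar>inner (\<Phi> *v axis i 1) (\<Phi> *v a)\<bar> \<le> \<delta> * norm a"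
proof -
  define c where "c = norm a"
  define e :: "real^'n" where "e = axis i 1"
  define p where "p = inner (\<Phi> *v e) (\<Phi> *v a)"
  have "a $ i = 0" using assms(2,4) unfolding supp_vec_def by auto
  then have ea: "inner e a = 0" unfolding e_def by (simp add: inner_axis')
  have sparse: "l0norm (c *\<^sub>R e + s *\<^sub>R a) \<le> K + 1" for s
  proof -
    have "supp_vec (c *\<^sub>R e + s *\<^sub>R a) \<subseteq> insert i T"
      using assms(2) unfolding supp_vec_def e_def by (auto simp: axis_def)
    moreover have "card (insert i T) \<le> K + 1" using assms(3,4) by simp
    ultimately show ?thesis using l0norm_le_card order_trans by blast
  qed
  have norm_sq: "(norm (c *\<^sub>R e + s *\<^sub>R a))\<^sup>2 = 2 * c\<^sup>2" if "s\<^sup>2 = 1" for s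
  proof -
    have "inner e e = 1" unfolding e_def by simp
    moreover have "inner a e = 0" using ea by (simp add: inner_commute)
    moreover have "inner a a = c * c" unfolding c_def by (simp flip: power2_eq_square add: power2_norm_eq_inner)
    ultimately show ?thesis using ea that
      unfolding power2_norm_eq_inner inner_add_left inner_add_right inner_scaleR_left inner_scaleR_right
      by (simp add: power2_eq_square algebra_simps)
  qed
  \<comment> \<open>\<open>c e \<plusminus> a\<close> are \<open>(K + 1)\<close>-sparse of equal norm, so the RIP bounds their
    polarization \<open>4 c p\<close>\<close>
  have one_sided: "s * (c * p) \<le> \<delta> * c\<^sup>2" if s: "s\<^sup>2 = 1" for s
  proof -
    have minus: "c *\<^sub>R e + (- s) *\<^sub>R a = c *\<^sub>R e - s *\<^sub>R a" by simp
    have "(- s)\<^sup>2 = 1" using s by simp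
    note sparse_minus = sparse[of "- s", unfolded minus] and norm_minus = norm_sq[OF this, unfolded minus]
    have "(norm (\<Phi> *v (c *\<^sub>R e + s *\<^sub>R a)))\<^sup>2 \<le> (1 + \<delta>) * (2 * c\<^sup>2)"
      using RIP_upper[OF rip sparse[of s]] unfolding norm_sq[OF s] .
    moreover have "(1 - \<delta>) * (2 * c\<^sup>2) \<le> (norm (\<Phi> *v (c *\<^sub>R e - s *\<^sub>R a)))\<^sup>2"
      using RIP_lower[OF rip sparse_minus] unfolding norm_minus .
    moreover have "(norm (\<Phi> *v (c *\<^sub>R e + s *\<^sub>R a)))\<^sup>2 - (norm (\<Phi> *v (c *\<^sub>R e - s *\<^sub>R a)))\<^sup>2
        = 4 * (s * (c * p))"
      using polarization_identity[of "c *\<^sub>R (\<Phi> *v e)" "s *\<^sub>R (\<Phi> *v a)"] unfolding p_def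
      by (simp add: matrix_vector_right_distrib matrix_vector_mult_diff_distrib matrix_vector_mult_scaleR)
    ultimately show ?thesis by (simp add: algebra_simps)
  qed
  have "c * \<bar>p\<bar> \<le> c * (\<delta> * c)"
    using one_sided[of 1] one_sided[of "-1"] by (simp add: abs_if power2_eq_square mult_ac)
  moreover have "c \<ge> 0" unfolding c_def by simp
  ultimately have "c = 0 \<or> \<bar>p\<bar> \<le> \<delta> * c" by (auto simp: mult_le_cancel_left)
  then show ?thesis unfolding p_def e_def c_def by auto
qed

lemma greedy_selection_in_support:
  fixes \<Phi> :: "real^'n^'m" and u :: "real^'n"
  defines "h \<equiv> transpose \<Phi> *v (\<Phi> *v u)"
  assumes rip: "RIP \<Phi> (K + 1) \<delta>" and small: "\<delta> * (1 + sqrt K) < 1"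
    and supp: "supp_vec u \<subseteq> T" and card: "card T \<le> K" and "u \<noteq> 0"
    and max: "\<And>i. \<bar>h $ i\<bar> \<le> \<bar>h $ j\<bar>"
  shows "j \<in> T" and "h $ j \<noteq> 0"
proof -
  define H where "H = \<bar>h $ j\<bar>"
  have H: "0 \<le> H" "\<And>i. \<bar>h $ i\<bar> \<le> H" using max unfolding H_def by auto
  have u: "norm u > 0" using \<open>u \<noteq> 0\<close> by simp
  have \<delta>: "0 < \<delta>" "\<delta> < 1" using rip unfolding RIP_def by auto
  have "l0norm u \<le> K + 1" using l0norm_le_card[OF supp] card by simp
  then have "(1 - \<delta>) * (norm u)\<^sup>2 \<le> (norm (\<Phi> *v u))\<^sup>2" by (rule RIP_lower[OF rip])
  also have "\<dots> = inner u h"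
    unfolding h_def inner_transpose_mult power2_norm_eq_inner ..
  also have "\<dots> \<le> sqrt (card T) * H * norm u"
    by (rule inner_le_sqrt_card_max_abs[OF supp H(2)])
  also have "\<dots> \<le> sqrt K * H * norm u"
    using card H(1) by (intro mult_right_mono) auto
  finally have "((1 - \<delta>) * norm u) * norm u \<le> (sqrt K * H) * norm u"
    by (simp add: power2_eq_square mult_ac)
  then have key: "(1 - \<delta>) * norm u \<le> sqrt K * H"
    using u by simp
  show "h $ j \<noteq> 0"
  proof
    assume "h $ j = 0"
    then show False using key u \<delta> unfolding H_def by (simp add: mult_le_0_iff)
  qed
  show "j \<in> T"
  proof (rule ccontr)
    assume "j \<notin> T"
    have "H \<le> \<delta> * norm u"
      unfolding H_def h_def transpose_mult_component
      using RIP_column_correlation[OF rip supp card \<open>j \<notin> T\<close>] .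
    then have "sqrt K * H \<le> sqrt K * (\<delta> * norm u)" by (simp add: mult_left_mono)
    with key have "(1 - \<delta>) * norm u \<le> (\<delta> * sqrt K) * norm u" by (simp add: mult_ac)
    then have "1 - \<delta> \<le> \<delta> * sqrt K" using u by simp
    then show False using small by (simp add: algebra_simps)
  qed
qed

lemma omp_run_selection:
  assumes "omp_run \<Phi> y L Lam xs" and "l < L"
  obtains j where "\<And>i. \<bar>(transpose \<Phi> *v (y - \<Phi> *v xs l)) $ i\<bar> \<le> \<bar>(transpose \<Phi> *v (y - \<Phi> *v xs l)) $ j\<bar>"
    and "Lam (Suc l) = insert j (Lam l)"
  using assms unfolding omp_run_def Let_def by blast

lemma omp_run_projection:
  assumes "omp_run \<Phi> y L Lam xs" and "l < L"
  shows "supp_vec (xs (Suc l)) \<subseteq> Lam (Suc l)"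
    and "supp_vec z \<subseteq> Lam (Suc l) \<Longrightarrow> norm (y - \<Phi> *v xs (Suc l)) \<le> norm (y - \<Phi> *v z)"
  using assms unfolding omp_run_def Let_def by blast+

lemma omp_run_supp:
  assumes "omp_run \<Phi> y L Lam xs" and "l \<le> L"
  shows "supp_vec (xs l) \<subseteq> Lam l"
proof (cases l)
  case 0
  then show ?thesis using assms(1) unfolding omp_run_def by (simp add: supp_vec_def)
next
  case (Suc k)
  with assms(2) have "k < L" by simp
  then show ?thesis using omp_run_projection(1)[OF assms(1)] Suc by simp
qed

lemma omp_run_card:
  assumes "omp_run \<Phi> y L Lam xs" and "l \<le> L"
  shows "card (Lam l) \<le> l"
  using assms(2)
proof (induction l)
  case 0
  then show ?case using assms(1) unfolding omp_run_def by simp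
next
  case (Suc l)
  then have "l < L" by simp
  then obtain j where "Lam (Suc l) = insert j (Lam l)" by (rule omp_run_selection[OF assms(1)])
  then show ?case using Suc by (simp add: card_insert_if)
qed

lemma omp_run_least_squares:
  assumes "omp_run \<Phi> y L Lam xs" and "0 < l" "l \<le> L" and "supp_vec z \<subseteq> Lam l"
  shows "norm (y - \<Phi> *v xs l) \<le> norm (y - \<Phi> *v z)"
proof -
  obtain k where l: "l = Suc k" using \<open>0 < l\<close> gr0_implies_Suc by blast
  with assms(3) have "k < L" by simp
  then show ?thesis using omp_run_projection(2)[OF assms(1)] assms(4) l by simp
qed

lemma omp_run_residual_orthogonal:
  assumes "omp_run \<Phi> y L Lam xs" and "l \<le> L" and "k \<in> Lam l"
  shows "(transpose \<Phi> *v (y - \<Phi> *v xs l)) $ k = 0"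
proof -
  have "0 < l" using assms(1,3) unfolding omp_run_def by (cases l) auto
  have "norm (y - \<Phi> *v xs l) \<le> norm ((y - \<Phi> *v xs l) - t *\<^sub>R (\<Phi> *v axis k 1))" for t
  proof -
    have "supp_vec (xs l + t *\<^sub>R axis k 1) \<subseteq> Lam l"
      using omp_run_supp[OF assms(1,2)] assms(3) unfolding supp_vec_def by (auto simp: axis_def)
    from omp_run_least_squares[OF assms(1) \<open>0 < l\<close> assms(2) this] show ?thesis
      by (simp add: matrix_vector_right_distrib matrix_vector_mult_scaleR algebra_simps)
  qed
  then show ?thesis
    unfolding transpose_mult_component by (rule inner_eq_0_if_norm_minimal)
qed

lemma omp_run_support_invariant:
  fixes \<Phi> :: "real^'n^'m" and x :: "real^'n"
  assumes rip: "RIP \<Phi> (K + 1) \<delta>" and small: "\<delta> * (1 + sqrt K) < 1"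
    and sparse: "l0norm x \<le> K" and run: "omp_run \<Phi> (\<Phi> *v x) L Lam xs" and "l \<le> L"
  shows "(Lam l \<subseteq> supp_vec x \<and> card (Lam l) = l) \<or> supp_vec x \<subseteq> Lam l"
  using \<open>l \<le> L\<close>
proof (induction l)
  case 0
  then show ?case using run unfolding omp_run_def by simp
next
  case (Suc l)
  then have "l < L" by simp
  obtain j where max: "\<And>i. \<bar>(transpose \<Phi> *v (\<Phi> *v x - \<Phi> *v xs l)) $ i\<bar>
      \<le> \<bar>(transpose \<Phi> *v (\<Phi> *v x - \<Phi> *v xs l)) $ j\<bar>"
    and Lam_Suc: "Lam (Suc l) = insert j (Lam l)"
    using omp_run_selection[OF run \<open>l < L\<close>] by metis
  from Suc.IH \<open>l < L\<close> consider
      (inside) "Lam l \<subseteq> supp_vec x" "card (Lam l) = l"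
    | (covered) "supp_vec x \<subseteq> Lam l"
    by fastforce
  then show ?case
  proof cases
    case inside
    define u where "u = x - xs l"
    have supp_u: "supp_vec u \<subseteq> supp_vec x"
      using supp_vec_diff[of x "xs l"] omp_run_supp[OF run, of l] \<open>l < L\<close> inside(1) unfolding u_def by auto
    show ?thesis
    proof (cases "u = 0")
      case True
      then show ?thesis
        using omp_run_supp[OF run, of l] \<open>l < L\<close> Lam_Suc unfolding u_def by auto
    next
      case False
      have residual: "\<Phi> *v x - \<Phi> *v xs l = \<Phi> *v u"
        unfolding u_def by (simp add: matrix_vector_mult_diff_distrib)
      have card: "card (supp_vec x) \<le> K" using sparse unfolding l0norm_def .
      note selection = greedy_selection_in_support[OF rip small supp_u card False max[unfolded residual]]
      have "j \<notin> Lam l"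
        using selection(2) omp_run_residual_orthogonal[OF run, of l j] \<open>l < L\<close> residual by auto
      then show ?thesis using selection(1) inside Lam_Suc by simp
    qed
  qed (use Lam_Suc in auto)
qed

theorem omp_exact_recovery:
  fixes \<Phi> :: "real^'n^'m" and x :: "real^'n"
  assumes rip: "RIP \<Phi> (K + 1) \<delta>" and small: "\<delta> * (1 + sqrt K) < 1"
    and sparse: "l0norm x \<le> K" and run: "omp_run \<Phi> (\<Phi> *v x) K Lam xs"
  shows "xs K = x"
proof (cases "K = 0")
  case True
  then have "x = 0" using sparse unfolding l0norm_def supp_vec_def by (auto simp: vec_eq_iff)
  then show ?thesis using run True unfolding omp_run_def by simp
next
  case False
  have covered: "supp_vec x \<subseteq> Lam K"
    using omp_run_support_invariant[OF rip small sparse run order_refl] sparse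
    by (metis card_subset_eq finite l0norm_def order_antisym_conv card_mono)
  have "norm (\<Phi> *v x - \<Phi> *v xs K) \<le> norm (\<Phi> *v x - \<Phi> *v x)"
    using omp_run_least_squares[OF run _ order_refl covered] False by simp
  then have kernel: "\<Phi> *v (x - xs K) = 0" by (simp add: matrix_vector_mult_diff_distrib)
  have "supp_vec (x - xs K) \<subseteq> Lam K"
    using supp_vec_diff[of x "xs K"] covered omp_run_supp[OF run order_refl] by auto
  then have "l0norm (x - xs K) \<le> K + 1"
    using l0norm_le_card omp_run_card[OF run order_refl] by (meson le_add1 order_trans)
  then show ?thesis using RIP_sparse_kernel[OF rip _ kernel] by simp
qed

theorem theorem1:
  fixes \<Phi> :: "real^'n^'m" and x :: "real^'n" and K :: nat and \<delta> :: real
    and Lam :: "nat \<Rightarrow> 'n set" and xs :: "nat \<Rightarrow> real^'n"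
  assumes "K \<ge> 1"
    and "RIP \<Phi> (K + 1) \<delta>"
    and "\<delta> < 1 / (3 * sqrt (real K))"
    and "l0norm x \<le> K"
    and "omp_run \<Phi> (\<Phi> *v x) K Lam xs"
  shows "xs K = x"
proof -
  have sqrt_K: "1 \<le> sqrt (real K)" using assms(1) by simp
  have "0 < \<delta>" using assms(2) unfolding RIP_def by simp
  have "\<delta> * sqrt K < 1 / 3" using assms(3) sqrt_K by (simp add: field_simps)
  moreover have "\<delta> \<le> \<delta> * sqrt K" using \<open>0 < \<delta>\<close> sqrt_K by simp
  ultimately have "\<delta> * (1 + sqrt K) < 1" by (simp add: algebra_simps)
  from omp_exact_recovery[OF assms(2) this assms(4,5)] show ?thesis .
qed

end
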